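(* Let $T=ABCD$ be a nondegenerate tetrahedron in $\mathbb{R}^3$ (vertices not coplanar) and let $AB$ be one of its edges. If $\mathbf{v}_{AB}(T)=\mathbf{0}$, then $T$ is achiral.
   Context: A tetrahedron (an ordered or unordered set of four points) in $\mathbb{R}^3$ is achiral if it can be mapped onto its mirror image by an orientation-preserving isometry of $\mathbb{R}^3$ (equivalently, it is congruent to its mirror image via a proper rigid motion); otherwise it is chiral. Edge vector $\mathbf{v}_{AB}$: Given the edge $AB$ of $T=ABCD$, label the four vertices as $L,R,K,F$ with $\{L,R\}=\{A,B\}$ and $\{K,F\}=\{C,D\}$ such that $(\vec{LK}\times\vec{LF})\cdot\vec{LR}\ge 0$ (there are two such labellings, obtained from each other by swapping $L\leftrightarrow R$ together with $K\leftrightarrow F$; both give the same $\mathbf{v}_{AB}$ below). Rotate the faces $LRK$ and $LRF$ about the line $LR$ into a common plane with $K$ and $F$ on the same side of $LR$. In this plane use the Cartesian coordinates whose $x$-axis is the line $LR$ directed from $L$ to $R$ and whose $y$-axis is the perpendicular bisector $m$ of segment $LR$, with $y\ge 0$ on the side containing $K,F$. Thus $x_K$ is the signed distance from $K$ to $m$ (negative if $K$ is closer to $L$ than to $R$), i.e. $x_K=\frac{\vec{LK}\cdot\vec{LR}}{|LR|}-\frac{|LR|}{2}$, and $y_K=\frac{|\vec{LK}\times\vec{LR}|}{|LR|}\ge 0$ is the distance from $K$ to the line $LR$; similarly for $(x_F,y_F)$. Let $\alpha\in[0,\pi]$ be the dihedral angle between the planes $ABC$ and $ABD$ of $T$. Define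 $$\mathbf{v}_{AB}\coloneqq \sin(\alpha)\,\big(x_F-x_K,\ (y_F-y_K)(x_F+x_K)\big)\in\mathbb{R}^2.$$ *)

theory Defs
  imports "HOL-Analysis.Analysis"
begin

type_synonym point = "real^3"

text \<open>Mirror image: point reflection through the origin (an orientation-reversing
isometry of R^3; any fixed one gives the same notion of chirality).\<close>
definition mirror_image :: "point set \<Rightarrow> point set" where
  "mirror_image S = uminus ` S"

definition achiral :: "point set \<Rightarrow> bool" where
  "achiral S \<longleftrightarrow> (\<exists>Q b. rotation_matrix Q \<and> (\<lambda>x. Q *v x + b) ` S = mirror_image S)"

definition xcoord :: "point \<Rightarrow> point \<Rightarrow> point \<Rightarrow> real" where
  "xcoord L R P = ((P - L) \<bullet> (R - L)) / norm (R - L) - norm (R - L) / 2"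

definition ycoord :: "point \<Rightarrow> point \<Rightarrow> point \<Rightarrow> real" where
  "ycoord L R P = norm (cross3 (P - L) (R - L)) / norm (R - L)"

text \<open>Dihedral angle between planes ABC and ABD along edge AB: angle between
the components of C - A and D - A orthogonal to B - A.\<close>
definition perp_comp :: "point \<Rightarrow> point \<Rightarrow> point" where
  "perp_comp u v = v - ((v \<bullet> u) / (u \<bullet> u)) *\<^sub>R u"

definition dihedral :: "point \<Rightarrow> point \<Rightarrow> point \<Rightarrow> point \<Rightarrow> real" where
  "dihedral A B C D =
     (let u = perp_comp (B - A) (C - A); w = perp_comp (B - A) (D - A)
      in arccos ((u \<bullet> w) / (norm u * norm w)))"

definition edge_vec :: "point \<Rightarrow> point \<Rightarrow> point \<Rightarrow> point \<Rightarrow> real \<times> real" where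
  "edge_vec A B C D =
     (let L = A; R = B;
          K = (if (cross3 (C - A) (D - A)) \<bullet> (B - A) \<ge> 0 then C else D);
          F = (if (cross3 (C - A) (D - A)) \<bullet> (B - A) \<ge> 0 then D else C);
          xK = xcoord L R K; yK = ycoord L R K;
          xF = xcoord L R F; yF = ycoord L R F;
          s = sin (dihedral A B C D)
      in (s * (xF - xK), s * ((yF - yK) * (xF + xK))))"

end

theory Submission
  imports Defs
begin

(* Since the tetrahedron is nondegenerate, sin of the dihedral angle at AB is nonzero, so
   v_AB = 0 forces x_K = x_F together with y_K = y_F or x_K = x_F = 0. The planar coordinates
   (x, y) of a point determine its distances to A and B, so either A and B are equidistant
   from K and F, or K and F are equidistant from A and B. In both cases two vertices P, Q are
   swapped and the other two fixed by the reflection in the perpendicular bisector plane of PQ;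
   composed with the point reflection defining the mirror image, this reflection becomes a
   half-turn, i.e. a proper rigid motion. *)

definition half_turn :: "real^3 \<Rightarrow> real^3^3" where
  "half_turn u = (\<chi> i j. 2 / (u \<bullet> u) * u$i * u$j - (if i = j then 1 else 0))"

lemma half_turn_apply: "half_turn u *v x = (2 * (u \<bullet> x) / (u \<bullet> u)) *\<^sub>R u - x"
  by (simp add: half_turn_def vec_eq_iff forall_3 matrix_vector_mult_def sum_3 inner_vec_def algebra_simps add_divide_distrib)

lemma rotation_matrix_half_turn:
  assumes "u \<noteq> 0"
  shows "rotation_matrix (half_turn u)"
proof -
  define U where "U = u$1*u$1 + u$2*u$2 + u$3*u$3"
  have uu: "u \<bullet> u = U" by (simp add: U_def inner_vec_def sum_3)
  have U0: "U \<noteq> 0" using assms uu by auto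
  have "transpose (half_turn u) ** half_turn u = mat 1"
    unfolding half_turn_def uu
    apply (simp add: vec_eq_iff forall_3 matrix_matrix_mult_def sum_3 transpose_def mat_def)
    apply (simp add: field_simps U0)
    apply (simp add: U_def)
    apply (intro conjI)
    by algebra+
  moreover have "det (half_turn u) = 1"
    unfolding half_turn_def uu
    apply (simp add: det_3 field_simps U0)
    apply (simp add: U_def)
    by algebra
  ultimately show ?thesis by (simp add: rotation_matrix_def orthogonal_matrix)
qed

lemma inner_add_diff_eq_diff_inner:
  fixes a b :: "'a::real_inner"
  shows "(a + b) \<bullet> (a - b) = a \<bullet> a - b \<bullet> b"
  unfolding inner_add_left inner_diff_right by (simp add: inner_commute)

lemma achiral_if_equidistant:
  fixes P Q X Y :: "real^3"
  assumes "P \<noteq> Q" and "dist X P = dist X Q" and "dist Y P = dist Y Q"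
  shows "achiral {P, Q, X, Y}"
proof -
  define u where "u = Q - P"
  define m where "m = (1/2) *\<^sub>R (P + Q)"
  define b where "b = - (2 * (m \<bullet> u) / (u \<bullet> u)) *\<^sub>R u"
  define f where "f x = half_turn u *v x + b" for x
  have u0: "u \<bullet> u \<noteq> 0" using assms(1) by (simp add: u_def)
  have f: "f x = (2 * ((x - m) \<bullet> u) / (u \<bullet> u)) *\<^sub>R u - x" for x
    by (simp add: f_def b_def half_turn_apply inner_diff_left inner_commute diff_divide_distrib algebra_simps)
  have "P - m = (-1/2) *\<^sub>R u" "Q - m = (1/2) *\<^sub>R u"
    by (simp_all add: m_def u_def vec_eq_iff field_simps)
  then have cP: "2 * ((P - m) \<bullet> u) / (u \<bullet> u) = -1" and cQ: "2 * ((Q - m) \<bullet> u) / (u \<bullet> u) = 1"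
    using u0 by simp_all
  have fPQ: "f P = - Q" "f Q = - P"
    unfolding f cP cQ by (simp_all add: u_def)
  have bisector: "(Z - m) \<bullet> u = 0" if "dist Z P = dist Z Q" for Z
  proof -
    have "Z - m = (1/2) *\<^sub>R ((Z - P) + (Z - Q))" and "u = (Z - P) - (Z - Q)"
      by (simp_all add: m_def u_def vec_eq_iff field_simps)
    then have "(Z - m) \<bullet> u = (1/2) * ((Z - P) \<bullet> (Z - P) - (Z - Q) \<bullet> (Z - Q))"
      by (simp only: inner_scaleR_left inner_add_diff_eq_diff_inner)
    also have "\<dots> = 0"
      using that by (simp add: dist_norm power2_norm_eq_inner[symmetric])
    finally show ?thesis .
  qed
  have "f X = - X" "f Y = - Y" using bisector assms(2,3) by (simp_all add: f)
  then have "f ` {P, Q, X, Y} = mirror_image {P, Q, X, Y}"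
    using fPQ by (auto simp: mirror_image_def)
  moreover have "rotation_matrix (half_turn u)" using assms(1) by (simp add: rotation_matrix_half_turn u_def)
  ultimately show ?thesis unfolding achiral_def f_def by blast
qed

lemma dist_left_sq_xcoord_ycoord:
  fixes A B P :: "real^3"
  assumes "A \<noteq> B"
  shows "(dist P A)\<^sup>2 = (ycoord A B P)\<^sup>2 + (xcoord A B P + dist A B / 2)\<^sup>2"
proof -
  define v where "v = B - A"
  define x where "x = xcoord A B P + dist A B / 2"
  define y where "y = ycoord A B P"
  have n: "norm v > 0" "dist A B = norm v" using assms by (simp_all add: v_def dist_norm norm_minus_commute)
  have "norm (cross3 (P - A) v) = norm v * y" "(P - A) \<bullet> v = norm v * x"
    using n by (simp_all add: x_def y_def ycoord_def xcoord_def v_def n(2)[unfolded v_def])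
  then have "(norm v * y)\<^sup>2 + (norm v * x)\<^sup>2 = (norm v * dist P A)\<^sup>2"
    using norm_cross_dot[of "P - A" v] by (simp add: dist_norm mult.commute)
  then have "(norm v)\<^sup>2 * (y\<^sup>2 + x\<^sup>2) = (norm v)\<^sup>2 * (dist P A)\<^sup>2"
    by (simp add: power_mult_distrib distrib_left)
  then show ?thesis using n by (simp add: x_def y_def)
qed

lemma dist_right_sq_xcoord_ycoord:
  fixes A B P :: "real^3"
  assumes "A \<noteq> B"
  shows "(dist P B)\<^sup>2 = (ycoord A B P)\<^sup>2 + (xcoord A B P - dist A B / 2)\<^sup>2"
proof -
  define v where "v = B - A"
  have n: "norm v > 0" "dist A B = norm v" using assms by (simp_all add: v_def dist_norm norm_minus_commute)
  have "(dist P B)\<^sup>2 = (dist P A)\<^sup>2 - 2 * ((P - A) \<bullet> v) + (norm v)\<^sup>2"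
    by (simp add: v_def dist_norm power2_norm_eq_inner inner_diff_left inner_diff_right inner_commute)
  moreover have "(P - A) \<bullet> v = norm v * (xcoord A B P + dist A B / 2)"
    using n by (simp add: xcoord_def v_def n(2)[unfolded v_def])
  ultimately show ?thesis
    using dist_left_sq_xcoord_ycoord[OF assms, of P] n(2) by (simp add: power2_eq_square algebra_simps)
qed

lemma dist_eq_if_xcoord_ycoord_eq:
  fixes A B P Q :: "real^3"
  assumes "A \<noteq> B" and "xcoord A B P = xcoord A B Q" and "ycoord A B P = ycoord A B Q"
  shows "dist P A = dist Q A" and "dist P B = dist Q B"
  using dist_left_sq_xcoord_ycoord[OF assms(1)] dist_right_sq_xcoord_ycoord[OF assms(1)] assms(2,3)
  by (metis power2_eq_iff_nonneg zero_le_dist)+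

lemma xcoord_eq_0_iff:
  fixes A B P :: "real^3"
  assumes "A \<noteq> B"
  shows "xcoord A B P = 0 \<longleftrightarrow> dist P A = dist P B"
proof -
  have "(dist P A)\<^sup>2 - (dist P B)\<^sup>2 = 2 * dist A B * xcoord A B P"
    unfolding dist_left_sq_xcoord_ycoord[OF assms] dist_right_sq_xcoord_ycoord[OF assms]
    by (simp add: power2_eq_square algebra_simps)
  moreover have "dist P A = dist P B \<longleftrightarrow> (dist P A)\<^sup>2 - (dist P B)\<^sup>2 = 0"
    by (simp add: power2_eq_iff_nonneg)
  ultimately show ?thesis using assms by simp
qed

lemma coplanar_if_dependent:
  fixes A B C D :: "real^3"
  assumes "c \<noteq> 0" and "a *\<^sub>R (B - A) + b *\<^sub>R (C - A) + c *\<^sub>R (D - A) = 0"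
  shows "coplanar {A, B, C, D}"
proof -
  define s where "s = - a / c"
  define t where "t = - b / c"
  have "c *\<^sub>R (D - A) = - (a *\<^sub>R (B - A) + b *\<^sub>R (C - A))"
    using assms(2) by (metis eq_neg_iff_add_eq_0 add.commute)
  then have "D - A = inverse c *\<^sub>R - (a *\<^sub>R (B - A) + b *\<^sub>R (C - A))"
    using assms(1) by (metis scaleR_scaleR left_inverse scaleR_one)
  then have "D - A = s *\<^sub>R (B - A) + t *\<^sub>R (C - A)"
    by (simp add: s_def t_def scaleR_add_right scaleR_diff_right divide_inverse mult.commute)
  then have "D = (1 - s - t) *\<^sub>R A + s *\<^sub>R B + t *\<^sub>R C"
    by (simp add: vec_eq_iff field_simps)
  then have "D \<in> affine hull {A, B, C}"
    unfolding affine_hull_3 by force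
  then have "{A, B, C, D} \<subseteq> affine hull {A, B, C}"
    using hull_subset[of "{A, B, C}" affine] by auto
  then show ?thesis unfolding coplanar_def by blast
qed

lemma triple_product_nonzero_if_not_coplanar:
  fixes A B C D :: "real^3"
  assumes "\<not> coplanar {A, B, C, D}"
  shows "cross3 (C - A) (D - A) \<bullet> (B - A) \<noteq> 0"
proof
  assume "cross3 (C - A) (D - A) \<bullet> (B - A) = 0"
  then have "det (vector [B - A, C - A, D - A] :: real^3^3) = 0"
    by (metis dot_cross_det inner_commute)
  then obtain k :: "real^3" where "k \<noteq> 0" and "transpose (vector [B - A, C - A, D - A]) *v k = 0"
    by (metis invertible_det_nz invertible_left_inverse matrix_left_invertible_ker det_transpose)
  then have lin: "k$1 *\<^sub>R (B - A) + k$2 *\<^sub>R (C - A) + k$3 *\<^sub>R (D - A) = 0"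
    and "k$1 \<noteq> 0 \<or> k$2 \<noteq> 0 \<or> k$3 \<noteq> 0"
    by (simp_all add: vec_eq_iff forall_3 matrix_vector_mult_def transpose_def sum_3 algebra_simps)
  then consider "coplanar {A, B, C, D}" | "coplanar {A, B, D, C}" | "coplanar {A, D, C, B}"
    using coplanar_if_dependent[of "k$3" "k$1" B A "k$2" C D]
      coplanar_if_dependent[of "k$2" "k$1" B A "k$3" D C]
      coplanar_if_dependent[of "k$1" "k$3" D A "k$2" C B]
    by (auto simp: algebra_simps)
  then show False
    using assms by cases (simp_all add: insert_commute)
qed

lemma sin_arccos_cos_angle_nonzero:
  fixes u w :: "real^3"
  assumes "cross3 u w \<noteq> 0"
  shows "sin (arccos ((u \<bullet> w) / (norm u * norm w))) \<noteq> 0"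
proof -
  have "(norm (cross3 u w))\<^sup>2 > 0" using assms by simp
  then have "(u \<bullet> w)\<^sup>2 < (norm u * norm w)\<^sup>2"
    using norm_cross_dot[of u w] by linarith
  then have "\<bar>u \<bullet> w\<bar> < norm u * norm w"
    by (simp add: abs_less_iff power2_less_imp_less)
  then have "-1 < (u \<bullet> w) / (norm u * norm w)" "(u \<bullet> w) / (norm u * norm w) < 1"
    by (auto simp: field_simps abs_less_iff)
  then show ?thesis by (rule sin_arccos_nonzero)
qed

lemma cross3_diff_scaleR_inner:
  fixes y z v :: "real^3"
  shows "cross3 (y - a *\<^sub>R v) (z - b *\<^sub>R v) \<bullet> v = cross3 y z \<bullet> v"
  by (simp add: cross3_simps)

lemma sin_dihedral_nonzero:
  fixes A B C D :: "real^3"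
  assumes "cross3 (C - A) (D - A) \<bullet> (B - A) \<noteq> 0"
  shows "sin (dihedral A B C D) \<noteq> 0"
proof -
  define u where "u = perp_comp (B - A) (C - A)"
  define w where "w = perp_comp (B - A) (D - A)"
  have "cross3 u w \<bullet> (B - A) = cross3 (C - A) (D - A) \<bullet> (B - A)"
    unfolding u_def w_def perp_comp_def by (rule cross3_diff_scaleR_inner)
  then have "cross3 u w \<noteq> 0" using assms by auto
  then show ?thesis
    using sin_arccos_cos_angle_nonzero unfolding dihedral_def u_def w_def Let_def by blast
qed

lemma edge_vec_eq_0E:
  fixes A B C D :: "real^3"
  assumes "edge_vec A B C D = (0, 0)" and "sin (dihedral A B C D) \<noteq> 0"
  obtains K F where "{K, F} = {C, D}" and "xcoord A B K = xcoord A B F"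
    and "ycoord A B K = ycoord A B F \<or> xcoord A B K = 0"
proof -
  define K where "K = (if cross3 (C - A) (D - A) \<bullet> (B - A) \<ge> 0 then C else D)"
  define F where "F = (if cross3 (C - A) (D - A) \<bullet> (B - A) \<ge> 0 then D else C)"
  have "sin (dihedral A B C D) * (xcoord A B F - xcoord A B K) = 0"
    "sin (dihedral A B C D) * ((ycoord A B F - ycoord A B K) * (xcoord A B F + xcoord A B K)) = 0"
    using assms(1) unfolding edge_vec_def Let_def K_def F_def by simp_all
  then have "xcoord A B K = xcoord A B F" "ycoord A B K = ycoord A B F \<or> xcoord A B K = 0"
    using assms(2) by auto
  moreover have "{K, F} = {C, D}" by (auto simp: K_def F_def)
  ultimately show thesis using that by blast
qed

theorem lemma1:
  fixes A B C D :: "real^3"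
  assumes "\<not> coplanar {A, B, C, D}"
    and "edge_vec A B C D = (0, 0)"
  shows "achiral {A, B, C, D}"
proof -
  have triple: "cross3 (C - A) (D - A) \<bullet> (B - A) \<noteq> 0"
    using assms(1) by (rule triple_product_nonzero_if_not_coplanar)
  then have "A \<noteq> B" "C \<noteq> D" by auto
  obtain K F where KF: "{K, F} = {C, D}" and x: "xcoord A B K = xcoord A B F"
    and y: "ycoord A B K = ycoord A B F \<or> xcoord A B K = 0"
    using edge_vec_eq_0E[OF assms(2) sin_dihedral_nonzero[OF triple]] .
  have "K \<noteq> F" using KF \<open>C \<noteq> D\<close> by auto
  have T: "{A, B, C, D} = {A, B, K, F}" using KF by auto
  from y show ?thesis
  proof
    assume "ycoord A B K = ycoord A B F"
    then have "achiral {K, F, A, B}"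
      using achiral_if_equidistant[OF \<open>K \<noteq> F\<close>] dist_eq_if_xcoord_ycoord_eq[OF \<open>A \<noteq> B\<close> x]
      by (simp add: dist_commute)
    then show ?thesis by (simp add: T insert_commute)
  next
    assume "xcoord A B K = 0"
    then have "dist K A = dist K B" "dist F A = dist F B"
      using x xcoord_eq_0_iff[OF \<open>A \<noteq> B\<close>] by metis+
    then show ?thesis
      using achiral_if_equidistant[OF \<open>A \<noteq> B\<close>] T by simp
  qed
qed

end
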